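(* Let $m/n\in(0,1/2)$, $\mathrm{LFS}(m/n)=(0=u_1/v_1,\dots,u_\alpha/v_\alpha)$, and let the elements of $\mathcal A_{m/n}$ be $0=k_1<k_2<\cdots<k_\alpha=m-1$. Then $\#\mathcal O_{m/n}[k_i,0]=v_i$ for each $i$. In particular, the elements of $\mathcal A_{m/n}$ appear in decreasing order along the orbit segment $\mathcal O_{m/n}[m,0]$.
   Context: Rationals in lowest terms. $\mathrm{LFP}(h/k)$ is the element immediately preceding $h/k$ in the increasing list of rationals in $[0,1/2]$ with denominator at most $k$; $\mathrm{LFS}(m/n)=(0=u_1/v_1,\dots,u_\alpha/v_\alpha)$ with $u_\alpha/v_\alpha=\mathrm{LFP}(m/n)$ and $u_i/v_i=\mathrm{LFP}(u_{i+1}/v_{i+1})$. $+_n$ is addition mod $n$; $\mathcal O_{m/n}[r,s]=\{r+_njm\colon0\le j\le K\}$ with $K\ge0$ least such that $r+_nKm=s$ (an orbit segment ordered by $j$). $k\in[0,m-1]$ is $m/n$-admissible if $\{k+1,\dots,m-1\}\cap\mathcal O_{m/n}[k,0]=\emptyset$; $\mathcal A_{m/n}$ is the set of such $k$ (it has exactly $\alpha$ elements, including $0$ and $m-1$). *)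

theory Defs
  imports Main "HOL.Rat"
begin

definition denom :: "rat \<Rightarrow> int" where
  "denom q = snd (quotient_of q)"

definition LFP :: "rat \<Rightarrow> rat" where
  "LFP q = Max {x. 0 \<le> x \<and> x \<le> 1/2 \<and> denom x \<le> denom q \<and> x < q}"

(* us is LFS(q) = (u_1,...,u_alpha) as a list (0-indexed):
   u_1 = 0, u_alpha = LFP q, u_i = LFP u_{i+1}, and the iteration stops
   at the first time 0 is reached. *)
definition is_LFS :: "rat \<Rightarrow> rat list \<Rightarrow> bool" where
  "is_LFS q us \<longleftrightarrow> us \<noteq> [] \<and> hd us = 0 \<and> last us = LFP q \<and>
     (\<forall>i. Suc i < length us \<longrightarrow> us ! i = LFP (us ! Suc i)) \<and>
     0 \<notin> set (tl us)"

definition orbK :: "nat \<Rightarrow> nat \<Rightarrow> nat \<Rightarrow> nat \<Rightarrow> nat" where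
  "orbK m n r s = (LEAST K. (r + K * m) mod n = s)"

definition orb_list :: "nat \<Rightarrow> nat \<Rightarrow> nat \<Rightarrow> nat \<Rightarrow> nat list" where
  "orb_list m n r s = map (\<lambda>j. (r + j * m) mod n) [0..<Suc (orbK m n r s)]"

definition orb :: "nat \<Rightarrow> nat \<Rightarrow> nat \<Rightarrow> nat \<Rightarrow> nat set" where
  "orb m n r s = set (orb_list m n r s)"

definition admissible :: "nat \<Rightarrow> nat \<Rightarrow> nat \<Rightarrow> bool" where
  "admissible m n k \<longleftrightarrow> k \<le> m - 1 \<and> {k+1..m-1} \<inter> orb m n k 0 = {}"

definition adm_set :: "nat \<Rightarrow> nat \<Rightarrow> nat set" where
  "adm_set m n = {k. admissible m n k}"

end

theory Submission
  imports Defs "HOL-Number_Theory.Cong"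
begin

(* Write steps k for the number of steps the orbit k, k +_n m, k +_n 2m, ... needs to reach 0, so
   that #O[k,0] = steps k + 1. Since k + (steps k) m = 0 (mod n), we get (steps k + 1) m = m - k
   (mod n) for k < m. Hence k is admissible iff steps is larger than at k at every y in (k, m),
   and k |-> steps k + 1 is an increasing bijection from the admissible numbers onto the record
   times of v |-> v m mod n, i.e. the v whose residue is smaller than that of every 0 < w < v.
   On the rational side, LFS(m/n) is the list of best lower approximations of m/n (fractions
   r < m/n exceeding every fraction below m/n of denominator at most denom r), ordered by
   increasing denominator, and u/v is one iff v is a record time and u = floor (v m / n): the gap
   v m - u n = v m mod n measures how far u/v lies below m/n. Matching the two increasing lists
   gives the orbit sizes. Along the orbit of m, steps drops by one at each point, while it
   increases on admissible numbers, so these appear in decreasing order. *)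

section \<open>Numerators and denominators\<close>

definition numer :: "rat \<Rightarrow> int" where
  "numer q = fst (quotient_of q)"

lemma denom_pos: "0 < denom q"
  unfolding denom_def by (rule quotient_of_denom_pos')

lemma numer_denom: "of_int (numer q) / of_int (denom q) = q"
  unfolding numer_def denom_def by (rule quotient_of_div [symmetric]) simp

lemma coprime_numer_denom: "coprime (numer q) (denom q)"
  unfolding numer_def denom_def by (rule quotient_of_coprime) simp

lemma denom_zero [simp]: "denom 0 = 1"
  unfolding denom_def by simp

lemma le_div_of_mult_le:
  fixes a b c :: int
  assumes "0 < c" "a * c \<le> b"
  shows "a \<le> b div c"
proof -
  have "a = a * c div c" using assms(1) by simp
  also have "\<dots> \<le> b div c" using assms by (intro zdiv_mono1) simp_all
  finally show ?thesis .
qed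

lemma frac_less_iff:
  assumes "0 < b" "0 < d"
  shows "(of_int a / of_int b :: rat) < of_int c / of_int d \<longleftrightarrow> a * d < c * b"
  using assms by (simp add: field_simps flip: of_int_mult)

lemma frac_le_iff:
  assumes "0 < b" "0 < d"
  shows "(of_int a / of_int b :: rat) \<le> of_int c / of_int d \<longleftrightarrow> a * d \<le> c * b"
  using assms by (simp add: field_simps flip: of_int_mult)

lemma numer_nonneg: "0 \<le> q \<Longrightarrow> 0 \<le> numer q"
  using frac_le_iff[of 1 "denom q" 0 "numer q"] by (simp add: denom_pos numer_denom)

lemma denom_frac_le:
  assumes "0 < b"
  shows "denom (of_int a / of_int b) \<le> b"
proof -
  let ?x = "of_int a / of_int b :: rat"
  have "a * denom ?x = numer ?x * b"
    using numer_denom[of ?x] assms denom_pos[of ?x] by (simp add: frac_eq_eq flip: of_int_mult)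
  then have "denom ?x dvd numer ?x * b" by (metis dvd_triv_right)
  then have "denom ?x dvd b"
    using coprime_numer_denom by (metis coprime_commute coprime_dvd_mult_right_iff)
  then show ?thesis using assms by (simp add: zdvd_imp_le)
qed

lemma denom_frac_coprime:
  assumes "0 < b" "coprime a b"
  shows "denom (of_int a / of_int b) = b"
  using assms unfolding denom_def by (simp add: Fract_of_int_quotient [symmetric] quotient_of_Fract)

lemma exists_between_smaller_denom:
  assumes "0 \<le> x" "x < y" "y < 1" "denom x = denom y"
  shows "\<exists>z. x < z \<and> z < y \<and> denom z < denom y"
proof -
  define a b c where "a = numer y" and "b = denom y" and "c = numer x"
  have b: "0 < b" unfolding b_def by (rule denom_pos)
  have y: "y = of_int a / of_int b" and x: "x = of_int c / of_int b"
    using numer_denom[of x] numer_denom[of y] assms(4) by (simp_all add: a_def b_def c_def)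
  have "c < a" using assms(2) frac_less_iff[OF b b] b unfolding x y by simp
  moreover have "a < b" using assms(3) frac_less_iff[OF b, of 1 a 1] unfolding y by simp
  moreover have "0 < c"
  proof (rule ccontr)
    have "0 \<le> c" unfolding c_def using assms(1) by (rule numer_nonneg)
    moreover assume "\<not> 0 < c"
    ultimately have "c = 0" "x = 0" unfolding x by simp_all
    then show False using assms(4) \<open>c < a\<close> \<open>a < b\<close> unfolding b_def by simp
  qed
  ultimately have b1: "0 < b - 1" and "c * b < a * (b - 1)" "c * (b - 1) < c * b"
    using mult_right_mono[of "c + 1" a "b - 1"] by (simp_all add: algebra_simps)
  then have "x < of_int c / of_int (b - 1)" "of_int c / of_int (b - 1) < y"
    unfolding x y by (simp_all only: frac_less_iff[OF b b1] frac_less_iff[OF b1 b])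
  moreover have "denom (of_int c / of_int (b - 1)) < b"
    using denom_frac_le[of "b - 1" c] \<open>0 < c\<close> \<open>c < a\<close> \<open>a < b\<close> by simp
  ultimately show ?thesis unfolding b_def by blast
qed

section \<open>Left Farey predecessors and best lower approximations\<close>

lemma finite_bounded_denom: "finite {x :: rat. 0 \<le> x \<and> x \<le> 1 \<and> denom x \<le> B}"
proof (rule finite_subset)
  show "{x. 0 \<le> x \<and> x \<le> 1 \<and> denom x \<le> B}
      \<subseteq> (\<lambda>(a, b). of_int a / of_int b) ` ({0..B} \<times> {1..B})"
  proof
    fix x :: rat assume x: "x \<in> {x. 0 \<le> x \<and> x \<le> 1 \<and> denom x \<le> B}"
    have "numer x * 1 \<le> 1 * denom x"
      using x frac_le_iff[of "denom x" 1 "numer x" 1] by (simp add: numer_denom denom_pos)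
    with x show "x \<in> (\<lambda>(a, b). of_int a / of_int b) ` ({0..B} \<times> {1..B})"
      using numer_nonneg[of x] denom_pos[of x] numer_denom[of x]
      by (intro image_eqI[of _ _ "(numer x, denom x)"]) auto
  qed
qed simp

lemma
  assumes "0 < q"
  shows LFP_nonneg: "0 \<le> LFP q" and LFP_less: "LFP q < q"
    and denom_LFP_le: "denom (LFP q) \<le> denom q"
    and LFP_greatest: "\<And>x. 0 \<le> x \<Longrightarrow> x \<le> 1/2 \<Longrightarrow> denom x \<le> denom q \<Longrightarrow> x < q \<Longrightarrow> x \<le> LFP q"
proof -
  define S where "S = {x. 0 \<le> x \<and> x \<le> 1/2 \<and> denom x \<le> denom q \<and> x < q}"
  have "finite S"
    by (rule finite_subset[OF _ finite_bounded_denom[of "denom q"]]) (auto simp: S_def)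
  moreover have "0 \<in> S" using assms denom_pos[of q] by (simp add: S_def)
  ultimately have "LFP q \<in> S" "\<And>x. x \<in> S \<Longrightarrow> x \<le> LFP q"
    unfolding LFP_def S_def [symmetric] by (auto intro: Max_in Max_ge)
  then show "0 \<le> LFP q" "LFP q < q" "denom (LFP q) \<le> denom q"
    "\<And>x. 0 \<le> x \<Longrightarrow> x \<le> 1/2 \<Longrightarrow> denom x \<le> denom q \<Longrightarrow> x < q \<Longrightarrow> x \<le> LFP q"
    unfolding S_def by auto
qed

lemma denom_LFP_less:
  assumes "0 < q" "q \<le> 1/2"
  shows "denom (LFP q) < denom q"
proof (rule ccontr)
  assume "\<not> ?thesis"
  then have "denom (LFP q) = denom q" using denom_LFP_le[OF assms(1)] by simp
  then obtain z where "LFP q < z" "z < q" "denom z < denom q"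
    using exists_between_smaller_denom[OF LFP_nonneg LFP_less] assms by fastforce
  then show False
    using LFP_greatest[OF assms(1), of z] LFP_nonneg[OF assms(1)] assms(2) by simp
qed

definition best_lower_approx :: "rat \<Rightarrow> rat \<Rightarrow> bool" where
  "best_lower_approx q r \<longleftrightarrow> 0 \<le> r \<and> r < q \<and> denom r \<le> denom q \<and>
     (\<forall>x. 0 \<le> x \<longrightarrow> x < q \<longrightarrow> denom x \<le> denom r \<longrightarrow> x \<le> r)"

lemma best_lower_approx_ge_frac:
  assumes "best_lower_approx q r" "0 \<le> a" "0 < b" "b \<le> denom r" "of_int a / of_int b < q"
  shows "of_int a / of_int b \<le> r"
  using assms denom_frac_le[of b a] unfolding best_lower_approx_def by auto

lemma best_lower_approx_denom_less:
  assumes "best_lower_approx q r" "q < 1"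
  shows "denom r < denom q"
proof (rule ccontr)
  assume "\<not> ?thesis"
  with assms(1) have r: "0 \<le> r" "r < q" "denom r = denom q"
    and best: "\<And>x. 0 \<le> x \<Longrightarrow> x < q \<Longrightarrow> denom x \<le> denom r \<Longrightarrow> x \<le> r"
    unfolding best_lower_approx_def by auto
  then obtain z where "r < z" "z < q" "denom z < denom q"
    using exists_between_smaller_denom assms(2) by blast
  then show False using best[of z] r by simp
qed

lemma best_lower_approx_LFP:
  assumes "0 < q" "q \<le> 1/2"
  shows "best_lower_approx q (LFP q)"
  unfolding best_lower_approx_def
proof (intro conjI allI impI)
  fix x assume "0 \<le> x" "x < q" "denom x \<le> denom (LFP q)"
  then show "x \<le> LFP q"
    using LFP_greatest[OF assms(1)] denom_LFP_le[OF assms(1)] assms(2) by simp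
qed (use LFP_nonneg LFP_less denom_LFP_le assms in auto)

lemma best_lower_approx_LFP_closed:
  assumes "best_lower_approx q r" "r \<noteq> 0" "q \<le> 1/2"
  shows "best_lower_approx q (LFP r)"
proof -
  have r: "0 < r" "r < q" "denom r \<le> denom q"
    and best: "\<And>x. 0 \<le> x \<Longrightarrow> x < q \<Longrightarrow> denom x \<le> denom r \<Longrightarrow> x \<le> r"
    using assms(1,2) unfolding best_lower_approx_def by auto
  have denom_less: "denom (LFP r) < denom r" using r assms(3) by (intro denom_LFP_less) auto
  have "x \<le> LFP r" if "0 \<le> x" "x < q" "denom x \<le> denom (LFP r)" for x
  proof -
    have "x \<noteq> r" "x \<le> r" using that denom_less best by auto
    then show ?thesis using LFP_greatest[OF r(1) \<open>0 \<le> x\<close>] that denom_less assms(3) by simp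
  qed
  then show ?thesis
    using LFP_nonneg[OF r(1)] LFP_less[OF r(1)] r denom_less
    unfolding best_lower_approx_def by fastforce
qed

lemma best_lower_approx_le_LFP:
  assumes "best_lower_approx q r" "best_lower_approx q y" "r < y" "q \<le> 1/2"
  shows "r \<le> LFP y"
proof -
  have r: "0 \<le> r" "r < q" using assms(1) unfolding best_lower_approx_def by auto
  have "\<not> denom y \<le> denom r"
  proof
    assume "denom y \<le> denom r"
    then have "y \<le> r" using assms(1,2) unfolding best_lower_approx_def by blast
    then show False using assms(3) by simp
  qed
  then show ?thesis using LFP_greatest[of y r] r assms(3,4) by simp
qed

lemma
  assumes "is_LFS q us"
  shows LFS_nonempty: "us \<noteq> []" and LFS_nth_0: "us ! 0 = 0"
    and LFS_nth_last: "us ! (length us - 1) = LFP q"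
    and LFS_nth_Suc: "Suc i < length us \<Longrightarrow> us ! i = LFP (us ! Suc i)"
  using assms unfolding is_LFS_def by (auto simp: hd_conv_nth last_conv_nth)

lemma LFS_nth_nonzero:
  assumes "is_LFS q us" "0 < i" "i < length us"
  shows "us ! i \<noteq> 0"
proof -
  have "us ! i = tl us ! (i - 1)" using assms(2,3) by (simp add: nth_tl)
  moreover have "tl us ! (i - 1) \<in> set (tl us)" using assms(2,3) by simp
  ultimately show ?thesis using assms(1) unfolding is_LFS_def by auto
qed

lemma LFS_nth_best_lower_approx:
  assumes LFS: "is_LFS q us" and q: "0 < q" "q \<le> 1/2" and i: "i < length us"
  shows "best_lower_approx q (us ! i)"
proof -
  have "i \<le> length us - 1" using i by simp
  then show ?thesis
  proof (induction i rule: inc_induct)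
    case base
    then show ?case using LFS_nth_last[OF LFS] best_lower_approx_LFP[OF q] by simp
  next
    case (step i)
    then have "us ! i = LFP (us ! Suc i)" using LFS_nth_Suc[OF LFS] by simp
    moreover have "us ! Suc i \<noteq> 0" using LFS_nth_nonzero[OF LFS] step.hyps by simp
    ultimately show ?case using best_lower_approx_LFP_closed step.IH q(2) by simp
  qed
qed

lemma LFS_denom_sorted:
  assumes LFS: "is_LFS q us" and q: "0 < q" "q \<le> 1/2"
  shows "sorted_wrt (<) (map denom us)"
  unfolding sorted_wrt_iff_nth_Suc_transp[OF transp_on_less]
proof (intro allI impI)
  fix i assume "Suc i < length (map denom us)"
  then have i: "Suc i < length us" by simp
  then have "best_lower_approx q (us ! Suc i)" "us ! Suc i \<noteq> 0"
    using LFS_nth_best_lower_approx[OF LFS q] LFS_nth_nonzero[OF LFS] by auto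
  then have "denom (LFP (us ! Suc i)) < denom (us ! Suc i)"
    using q(2) unfolding best_lower_approx_def by (intro denom_LFP_less) auto
  then show "map denom us ! i < map denom us ! Suc i"
    using LFS_nth_Suc[OF LFS i] i by simp
qed

lemma best_lower_approx_in_LFS:
  assumes LFS: "is_LFS q us" and q: "0 < q" "q \<le> 1/2" and r: "best_lower_approx q r"
  shows "r \<in> set us"
proof (cases "r = 0")
  case True
  then show ?thesis using LFS_nth_0[OF LFS] LFS_nonempty[OF LFS] by (metis length_greater_0_conv nth_mem)
next
  case False
  have "r \<le> us ! (length us - 1)"
    using r q LFP_greatest[OF q(1), of r] unfolding LFS_nth_last[OF LFS] best_lower_approx_def by simp
  moreover have "\<not> r \<le> us ! 0" using False r unfolding LFS_nth_0[OF LFS] best_lower_approx_def by simp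
  ultimately obtain k where k: "k < length us - 1" "us ! k < r" "r \<le> us ! Suc k"
    using ex_least_nat_less[of "\<lambda>i. r \<le> us ! i"] by (metis le_refl not_le)
  have "\<not> r < us ! Suc k"
  proof
    assume "r < us ! Suc k"
    then have "r \<le> LFP (us ! Suc k)"
      using k q(2) r LFS_nth_best_lower_approx[OF LFS q, of "Suc k"] best_lower_approx_le_LFP by simp
    then show False using k LFS_nth_Suc[OF LFS, of k] by simp
  qed
  then have "r = us ! Suc k" using k by simp
  then show ?thesis using k by simp
qed

lemma set_LFS:
  assumes "is_LFS q us" "0 < q" "q \<le> 1/2"
  shows "set us = {r. best_lower_approx q r}"
  using LFS_nth_best_lower_approx[OF assms] best_lower_approx_in_LFS[OF assms]
  by (auto simp: in_set_conv_nth)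

section \<open>The orbit of x under x +_n m\<close>

lemma adm_set_less: "0 < m \<Longrightarrow> k \<in> adm_set m n \<Longrightarrow> k < m"
  unfolding adm_set_def admissible_def by auto

lemma finite_adm_set: "0 < m \<Longrightarrow> finite (adm_set m n)"
  using adm_set_less by (meson finite_lessThan finite_subset lessThan_iff subsetI)

definition residue_record :: "nat \<Rightarrow> nat \<Rightarrow> nat \<Rightarrow> bool" where
  "residue_record m n v \<longleftrightarrow> 0 < v \<and> v < n \<and> (\<forall>w. 0 < w \<longrightarrow> w < v \<longrightarrow> v * m mod n < w * m mod n)"

lemma residue_record_int_iff:
  "residue_record m n v \<longleftrightarrow> 0 < v \<and> v < n \<and>
     (\<forall>w::int. 0 < w \<longrightarrow> w < int v \<longrightarrow> int v * int m mod int n < w * int m mod int n)"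
proof -
  have mod_int: "int (u * m mod n) = int u * int m mod int n" for u by (simp add: zmod_int)
  have "(\<forall>w. 0 < w \<longrightarrow> w < v \<longrightarrow> v * m mod n < w * m mod n) \<longleftrightarrow>
      (\<forall>w::int. 0 < w \<longrightarrow> w < int v \<longrightarrow> int v * int m mod int n < w * int m mod int n)"
  proof (intro iffI allI impI)
    fix w :: int
    assume "\<forall>w. 0 < w \<longrightarrow> w < v \<longrightarrow> v * m mod n < w * m mod n" "0 < w" "w < int v"
    then have "int (v * m mod n) < int (nat w * m mod n)" by simp
    then show "int v * int m mod int n < w * int m mod int n" using \<open>0 < w\<close> by (simp add: mod_int)
  next
    fix w :: nat
    assume "\<forall>w::int. 0 < w \<longrightarrow> w < int v \<longrightarrow> int v * int m mod int n < w * int m mod int n"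
      "0 < w" "w < v"
    then have "int (v * m mod n) < int (w * m mod n)" by (simp add: mod_int)
    then show "v * m mod n < w * m mod n" by simp
  qed
  then show ?thesis unfolding residue_record_def by simp
qed

locale coprime_orbit =
  fixes m n :: nat
  assumes m_pos: "0 < m" and m_less_n: "m < n" and coprime_m_n: "coprime m n"
begin

abbreviation steps :: "nat \<Rightarrow> nat" where
  "steps x \<equiv> orbK m n x 0"

lemma orbit_inj:
  assumes "i < n" "j < n" "(x + i * m) mod n = (x + j * m) mod n"
  shows "i = j"
proof -
  have "[x + i * m = x + j * m] (mod n)" using assms(3) unfolding cong_def .
  then have "[i * m = j * m] (mod n)" by (rule iffD1[OF cong_add_lcancel_nat])
  then have "[i = j] (mod n)" using coprime_m_n cong_mult_rcancel_nat by blast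
  then show ?thesis using assms(1,2) by (rule cong_less_modulus_unique_nat)
qed

lemma orbit_hits_zero: "\<exists>K<n. (x + K * m) mod n = 0"
proof -
  let ?f = "\<lambda>j. (x + j * m) mod n"
  have inj: "inj_on ?f {..<n}" by (meson inj_onI lessThan_iff orbit_inj)
  have sub: "?f ` {..<n} \<subseteq> {..<n}" using m_less_n by auto
  have "?f ` {..<n} = {..<n}" by (rule endo_inj_surj[OF finite_lessThan sub inj])
  then have "0 \<in> ?f ` {..<n}" using m_less_n by simp
  then obtain K where "K < n" "0 = (x + K * m) mod n" by auto
  then show ?thesis by auto
qed

lemma steps_mod: "(x + steps x * m) mod n = 0"
proof -
  have "\<exists>K. (x + K * m) mod n = 0" using orbit_hits_zero[of x] by metis
  then show ?thesis unfolding orbK_def by (rule LeastI_ex)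
qed

lemma steps_le: "(x + j * m) mod n = 0 \<Longrightarrow> steps x \<le> j"
  unfolding orbK_def by (rule Least_le)

lemma steps_less: "steps x < n"
proof -
  obtain K where "K < n" "(x + K * m) mod n = 0" using orbit_hits_zero[of x] by (elim exE conjE)
  then show ?thesis using steps_le[of x K] by simp
qed

lemma steps_eqI:
  assumes "j < n" "(x + j * m) mod n = 0"
  shows "steps x = j"
  using orbit_inj[of "steps x" j x] steps_less[of x] steps_mod[of x] assms by simp

lemma card_orb: "card (orb m n x 0) = steps x + 1"
proof -
  have "inj_on (\<lambda>j. (x + j * m) mod n) {0..<Suc (steps x)}"
  proof (rule inj_onI)
    fix i j assume "i \<in> {0..<Suc (steps x)}" "j \<in> {0..<Suc (steps x)}"
      and "(x + i * m) mod n = (x + j * m) mod n"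
    then show "i = j" using orbit_inj steps_less[of x] by (meson atLeastLessThan_iff less_Suc_eq_le le_less_trans)
  qed
  then have "distinct (orb_list m n x 0)" by (simp add: orb_list_def distinct_map del: upt_Suc)
  then show ?thesis unfolding orb_def by (simp only: distinct_card) (simp add: orb_list_def)
qed

lemma mem_orb_iff: "y \<in> orb m n x 0 \<longleftrightarrow> (\<exists>j \<le> steps x. y = (x + j * m) mod n)"
  unfolding orb_def orb_list_def set_map set_upt image_iff
  by (simp only: atLeast0LessThan lessThan_Suc_atMost Bex_def atMost_iff)

lemma steps_inj:
  assumes "y < n" "z < n" "steps y = steps z"
  shows "y = z"
proof -
  have "[y + steps y * m = z + steps y * m] (mod n)"
    using steps_mod[of y] steps_mod[of z] assms(3) by (simp add: cong_def)
  then have "[y = z] (mod n)" by (rule iffD1[OF cong_add_rcancel_nat])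
  then show ?thesis using assms(1,2) by (rule cong_less_modulus_unique_nat)
qed

lemma steps_along_orbit:
  assumes "j \<le> steps x"
  shows "steps ((x + j * m) mod n) = steps x - j"
proof (rule steps_eqI)
  show "steps x - j < n" using steps_less[of x] by simp
  have "((x + j * m) mod n + (steps x - j) * m) mod n = (x + (j + (steps x - j)) * m) mod n"
    by (simp add: mod_add_left_eq algebra_simps)
  also have "\<dots> = 0" using assms steps_mod[of x] by simp
  finally show "((x + j * m) mod n + (steps x - j) * m) mod n = 0" .
qed

lemma mem_orb_iff_steps:
  assumes "y < n"
  shows "y \<in> orb m n x 0 \<longleftrightarrow> steps y \<le> steps x"
proof
  assume "y \<in> orb m n x 0"
  then show "steps y \<le> steps x" by (auto simp: mem_orb_iff steps_along_orbit)
next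
  assume le: "steps y \<le> steps x"
  define j where "j = steps x - steps y"
  have "steps ((x + j * m) mod n) = steps y" using le steps_along_orbit[of j x] by (simp add: j_def)
  then have "y = (x + j * m) mod n" using steps_inj assms m_less_n by simp
  then show "y \<in> orb m n x 0" unfolding mem_orb_iff by (intro exI[of _ j] conjI) (simp_all add: j_def)
qed

lemma admissible_iff_steps:
  assumes "k < m"
  shows "admissible m n k \<longleftrightarrow> (\<forall>y. k < y \<longrightarrow> y < m \<longrightarrow> steps k < steps y)"
proof -
  have "{k + 1..m - 1} = {y. k < y \<and> y < m}" using assms by auto
  then have "{k + 1..m - 1} \<inter> orb m n k 0 = {} \<longleftrightarrow> (\<forall>y. k < y \<longrightarrow> y < m \<longrightarrow> y \<notin> orb m n k 0)"
    by blast
  also have "\<dots> \<longleftrightarrow> (\<forall>y. k < y \<longrightarrow> y < m \<longrightarrow> steps k < steps y)"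
    using mem_orb_iff_steps m_less_n by (meson not_le order.strict_trans)
  finally have "{k + 1..m - 1} \<inter> orb m n k 0 = {} \<longleftrightarrow> (\<forall>y. k < y \<longrightarrow> y < m \<longrightarrow> steps k < steps y)" .
  moreover have "k \<le> m - 1" using assms by simp
  ultimately show ?thesis unfolding admissible_def by blast
qed

lemma Suc_steps_mult_mod:
  assumes "k < m"
  shows "(steps k + 1) * m mod n = m - k"
proof -
  obtain q where "k + steps k * m = n * q" using steps_mod[of k] by blast
  then have "(steps k + 1) * m = n * q + (m - k)" using assms by (simp add: algebra_simps)
  then show ?thesis using m_less_n by simp
qed

lemma Suc_steps_less:
  assumes "k < m"
  shows "steps k + 1 < n"
proof (rule ccontr)
  assume "\<not> ?thesis"
  then have "steps k + 1 = n" using steps_less[of k] by simp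
  then have "(steps k + 1) * m mod n = 0" by simp
  then show False using Suc_steps_mult_mod[OF assms] assms by simp
qed

lemma mult_mod_pos:
  assumes "0 < v" "v < n"
  shows "0 < v * m mod n"
proof (rule ccontr)
  assume "\<not> ?thesis"
  then have "n dvd v * m" by (simp add: dvd_eq_mod_eq_0)
  then have "n dvd v" using coprime_m_n by (simp add: coprime_commute coprime_dvd_mult_left_iff)
  then show False using assms by (auto dest: dvd_imp_le)
qed

lemma steps_diff_mult_mod:
  assumes "0 < v" "v < n" "v * m mod n \<le> m"
  shows "steps (m - v * m mod n) = v - 1"
proof (rule steps_eqI)
  show "v - 1 < n" using assms by simp
  have "m - v * m mod n + (v - 1) * m = v * m - v * m mod n"
    using assms by (cases v) (auto simp: algebra_simps)
  also have "\<dots> = n * (v * m div n)" by (simp add: minus_mod_eq_mult_div)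
  finally show "(m - v * m mod n + (v - 1) * m) mod n = 0" by simp
qed

lemma residue_record_Suc_steps:
  assumes "k \<in> adm_set m n"
  shows "residue_record m n (steps k + 1)"
proof -
  have k: "k < m" using adm_set_less[OF m_pos assms] .
  have adm: "\<And>y. k < y \<Longrightarrow> y < m \<Longrightarrow> steps k < steps y"
    using assms admissible_iff_steps[OF k] unfolding adm_set_def by auto
  have "m - k < w * m mod n" if w: "0 < w" "w < steps k + 1" for w
  proof (rule ccontr)
    assume "\<not> ?thesis"
    then have le: "w * m mod n \<le> m - k" by simp
    have "w < n" using w Suc_steps_less[OF k] by simp
    then have "0 < w * m mod n" "steps (m - w * m mod n) = w - 1"
      using mult_mod_pos steps_diff_mult_mod w(1) le by auto
    moreover have "steps k \<noteq> w - 1" "w - 1 \<le> steps k" using w by auto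
    ultimately have "m - w * m mod n \<noteq> k" "\<not> (k < m - w * m mod n \<and> m - w * m mod n < m)"
      using adm[of "m - w * m mod n"] by auto
    then show False using le \<open>0 < w * m mod n\<close> k by linarith
  qed
  then show ?thesis
    unfolding residue_record_def using Suc_steps_mult_mod[OF k] Suc_steps_less[OF k] by simp
qed

lemma residue_record_adm:
  assumes "residue_record m n v"
  shows "m - v * m mod n \<in> adm_set m n" and "steps (m - v * m mod n) + 1 = v"
proof -
  have v: "0 < v" "v < n"
    and smaller: "\<And>w. 0 < w \<Longrightarrow> w < v \<Longrightarrow> v * m mod n < w * m mod n"
    using assms unfolding residue_record_def by auto
  have "v * m mod n \<le> m"
    using smaller[of 1] m_less_n v(1) by (cases "v = 1") auto
  then have steps_k: "steps (m - v * m mod n) = v - 1" using steps_diff_mult_mod v by blast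
  then show "steps (m - v * m mod n) + 1 = v" using v by simp
  let ?k = "m - v * m mod n"
  have k: "?k < m" using mult_mod_pos[OF v] m_pos by simp
  have "steps ?k < steps y" if y: "?k < y" "y < m" for y
  proof (rule ccontr)
    assume "\<not> ?thesis"
    then have "steps y + 1 \<le> v" using steps_k v by simp
    moreover have "(steps y + 1) * m mod n < v * m mod n"
      using Suc_steps_mult_mod[OF y(2)] y by simp
    ultimately show False using smaller[of "steps y + 1"] by (cases "steps y + 1 = v") auto
  qed
  then show "?k \<in> adm_set m n" unfolding adm_set_def using admissible_iff_steps[OF k] by simp
qed

lemma strict_mono_on_steps_adm: "strict_mono_on (adm_set m n) steps"
proof (rule strict_mono_onI)
  fix k l assume "k \<in> adm_set m n" "l \<in> adm_set m n" "k < l"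
  then show "steps k < steps l"
    using admissible_iff_steps adm_set_less[OF m_pos] unfolding adm_set_def by auto
qed

lemma Suc_steps_image_adm_set: "(\<lambda>k. steps k + 1) ` adm_set m n = {v. residue_record m n v}"
  using residue_record_Suc_steps residue_record_adm by (auto intro: image_eqI [OF sym])

lemma steps_m: "steps m = n - 1"
proof (rule steps_eqI)
  have "m + (n - 1) * m = n * m" using m_less_n by (cases n) auto
  then show "(m + (n - 1) * m) mod n = 0" by simp
qed (use m_less_n in simp)

lemma adm_set_sorted_desc_along_orbit:
  "sorted_wrt (>) (filter (\<lambda>x. x \<in> adm_set m n) (orb_list m n m 0))"
proof -
  define e where "e j = (m + j * m) mod n" for j
  have orbit: "orb_list m n m 0 = map e [0..<n]"
    unfolding orb_list_def e_def steps_m using m_less_n by simp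
  have "e j < e i" if ij: "i < j" "j < n" and adm: "e i \<in> adm_set m n" "e j \<in> adm_set m n" for i j
  proof -
    have "steps (e j) < steps (e i)" using ij steps_along_orbit[of _ m] steps_m by (simp add: e_def)
    then show ?thesis using strict_mono_on_less[OF strict_mono_on_steps_adm adm(2,1)] by simp
  qed
  then have "sorted_wrt (\<lambda>i j. e j < e i) (filter (\<lambda>j. e j \<in> adm_set m n) [0..<n])"
    by (intro sorted_wrt_mono_rel[OF _ sorted_wrt_filter[OF sorted_wrt_upt]]) auto
  then show ?thesis unfolding orbit filter_map by (simp add: sorted_wrt_map comp_def)
qed

section \<open>Best lower approximations of m/n and residue records\<close>

lemma denom_frac_m_n: "denom (of_nat m / of_nat n) = int n"
  using denom_frac_coprime[of "int n" "int m"] m_less_n coprime_m_n by simp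

lemma frac_less_m_n_iff:
  "0 < b \<Longrightarrow> of_int a / of_int b < (of_nat m / of_nat n :: rat) \<longleftrightarrow> a * int n < int m * b"
  using frac_less_iff[of b "int n" a "int m"] m_less_n by simp

lemma not_dvd_mult_m:
  assumes "0 < w" "w < int n"
  shows "\<not> int n dvd w * int m"
proof
  assume "int n dvd w * int m"
  then have "int n dvd w" using coprime_m_n by (simp add: coprime_commute coprime_dvd_mult_left_iff)
  then show False using assms zdvd_imp_le by fastforce
qed

lemma best_lower_approx_denom_mod:
  assumes "best_lower_approx (of_nat m / of_nat n) r"
  shows "denom r * int m mod int n = denom r * int m - numer r * int n"
proof -
  define u v where "u = numer r" and "v = denom r"
  have v: "0 < v" "v < int n"
    using best_lower_approx_denom_less[OF assms] denom_pos m_less_n by (simp_all add: v_def denom_frac_m_n)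
  have u: "0 \<le> u" using assms unfolding u_def best_lower_approx_def by (simp add: numer_nonneg)
  have r: "r = of_int u / of_int v" by (simp add: u_def v_def numer_denom)
  have "u * int n < int m * v"
    using assms frac_less_m_n_iff[OF v(1)] unfolding r best_lower_approx_def by simp
  moreover have "\<not> (u + 1) * int n < int m * v"
  proof
    assume "(u + 1) * int n < int m * v"
    then have "of_int (u + 1) / of_int v < (of_nat m / of_nat n :: rat)"
      by (simp only: frac_less_m_n_iff[OF v(1)])
    then have "of_int (u + 1) / of_int v \<le> r"
      using best_lower_approx_ge_frac[OF assms, of "u + 1" v] u v by (simp add: v_def)
    then show False using v(1) unfolding r by (simp add: divide_le_cancel)
  qed
  moreover have "(u + 1) * int n \<noteq> int m * v"
    using not_dvd_mult_m[OF v] by (metis dvd_triv_right mult.commute)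
  ultimately have "0 < v * int m - u * int n" "v * int m - u * int n < int n"
    by (simp_all add: algebra_simps)
  then have "(v * int m) mod int n = v * int m - u * int n"
    by (metis add_diff_cancel_left' diff_add_cancel mod_mult_self3 mod_pos_pos_trivial le_less)
  then show ?thesis by (simp add: u_def v_def)
qed

lemma best_lower_approx_floor_le:
  assumes best: "best_lower_approx (of_nat m / of_nat n) r" and w: "0 < w" "w \<le> denom r"
  shows "(w * int m div int n) * denom r \<le> numer r * w"
proof -
  define x where "x = w * int m div int n"
  have "w < int n"
    using w best_lower_approx_denom_less[OF best] m_less_n by (simp add: denom_frac_m_n)
  then have "w * int m mod int n \<noteq> 0" using not_dvd_mult_m[of w] w(1) by (simp add: dvd_eq_mod_eq_0)
  then have "0 < w * int m mod int n" using m_less_n by (simp add: order_less_le)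
  moreover have "x * int n + w * int m mod int n = w * int m" unfolding x_def by (rule div_mult_mod_eq)
  ultimately have "x * int n < int m * w" by (simp add: mult.commute)
  moreover have "0 \<le> x" using w m_less_n by (simp add: x_def pos_imp_zdiv_nonneg_iff)
  ultimately have "of_int x / of_int w \<le> r"
    using best_lower_approx_ge_frac[OF best, of x w] frac_less_m_n_iff[OF w(1)] w by simp
  then show ?thesis
    using frac_le_iff[OF w(1) denom_pos[of r], of x "numer r"] numer_denom[of r] by (simp add: x_def)
qed

lemma best_lower_approx_mod_less:
  assumes best: "best_lower_approx (of_nat m / of_nat n) r" and w: "0 < w" "w < denom r"
  shows "denom r * int m mod int n < w * int m mod int n"
proof (rule ccontr)
  define u v x where "u = numer r" and "v = denom r" and "x = w * int m div int n"
  (* Both x/w and (u - x)/(v - w) lie below m/n with denominator less than v, so neither exceeds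
     u/v; together this forces x v = u w, impossible for coprime u, v and 0 < w < v. *)
  have v: "0 < v" "v < int n"
    using best_lower_approx_denom_less[OF best] denom_pos m_less_n by (simp_all add: v_def denom_frac_m_n)
  have w': "w < v" using w(2) by (simp add: v_def)
  have u: "0 \<le> u" using best unfolding u_def best_lower_approx_def by (simp add: numer_nonneg)
  have r: "r = of_int u / of_int v" by (simp add: u_def v_def numer_denom)
  have E: "v * int m mod int n = v * int m - u * int n"
    using best_lower_approx_denom_mod[OF best] by (simp add: u_def v_def)
  have wm: "w * int m = x * int n + w * int m mod int n" by (simp add: x_def)
  have xv: "x * v \<le> u * w"
    using best_lower_approx_floor_le[OF best] w by (simp add: u_def v_def x_def)
  assume "\<not> ?thesis"
  then have "w * int m mod int n \<le> v * int m mod int n" by (simp add: v_def)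
  moreover have "w * int m mod int n \<noteq> v * int m mod int n"
  proof
    assume "w * int m mod int n = v * int m mod int n"
    then have "(v - w) * int m = (u - x) * int n" using wm E by (simp add: algebra_simps)
    then show False using not_dvd_mult_m[of "v - w"] w(1) w' v by simp
  qed
  ultimately have "(u - x) * int n < int m * (v - w)" using wm E by (simp add: algebra_simps)
  then have "of_int (u - x) / of_int (v - w) < (of_nat m / of_nat n :: rat)"
    using w' by (simp only: frac_less_m_n_iff diff_gt_0_iff_gt)
  moreover have "x \<le> u"
  proof -
    have "u * w \<le> u * v" using u w' by (simp add: mult_left_mono)
    then have "x * v \<le> u * v" using xv by linarith
    then show ?thesis using v by simp
  qed
  ultimately have "of_int (u - x) / of_int (v - w) \<le> r"
    using best_lower_approx_ge_frac[OF best, of "u - x" "v - w"] w w' by (simp add: v_def)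
  then have "(u - x) * v \<le> u * (v - w)"
    using w' v unfolding r by (simp only: frac_le_iff diff_gt_0_iff_gt)
  then have "x * v = u * w" using xv by (simp add: algebra_simps)
  then have "v dvd u * w" by (metis dvd_triv_right)
  then have "v dvd w"
    using coprime_numer_denom[of r] by (simp add: u_def v_def coprime_commute coprime_dvd_mult_right_iff)
  then show False using w(1) w' zdvd_imp_le by fastforce
qed

lemma best_lower_approx_residue_record:
  assumes best: "best_lower_approx (of_nat m / of_nat n) r"
  shows "residue_record m n (nat (denom r))"
  using best_lower_approx_mod_less[OF best] best_lower_approx_denom_less[OF best] denom_pos[of r] m_less_n
  unfolding residue_record_int_iff by (simp add: denom_frac_m_n)

lemma frac_div_below_m_n:
  assumes "0 < v" "v < n"
  shows "0 \<le> (of_int (int v * int m div int n) :: rat)"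
    and "of_int (int v * int m div int n) / of_int (int v) < (of_nat m / of_nat n :: rat)"
proof -
  define u where "u = int v * int m div int n"
  show "0 \<le> (of_int (int v * int m div int n) :: rat)"
    using m_less_n by (simp add: pos_imp_zdiv_nonneg_iff)
  have "int v * int m mod int n \<noteq> 0" using not_dvd_mult_m[of "int v"] assms by (simp add: dvd_eq_mod_eq_0)
  then have "0 < int v * int m mod int n" using m_less_n by (simp add: order_less_le)
  moreover have "u * int n + int v * int m mod int n = int v * int m"
    unfolding u_def by (rule div_mult_mod_eq)
  ultimately have "u * int n < int m * int v" by (simp add: mult.commute)
  then show "of_int (int v * int m div int n) / of_int (int v) < (of_nat m / of_nat n :: rat)"
    using assms frac_less_m_n_iff[of "int v" u] by (simp add: u_def)
qed

lemma residue_record_lower_bound: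
  assumes record_v: "residue_record m n v"
    and x: "0 \<le> x" "x < of_nat m / of_nat n" "denom x < int v"
  shows "x < of_int (int v * int m div int n) / of_int (int v)"
proof -
  define u E where "u = int v * int m div int n" and "E = int v * int m mod int n"
  define a b where "a = numer x" and "b = denom x"
  have v: "0 < v" "v < n" using record_v unfolding residue_record_def by auto
  have smaller: "E < w * int m mod int n" if "0 < w" "w < int v" for w
    using record_v that unfolding residue_record_int_iff E_def by blast
  have "0 < E" using mult_mod_pos[OF v] unfolding E_def by (metis of_nat_0_less_iff of_nat_mult zmod_int)
  have b: "0 < b" by (simp add: b_def denom_pos)
  have xr: "x = of_int a / of_int b" by (simp add: a_def b_def numer_denom)
  have an: "a * int n < int m * b" using x(2) frac_less_m_n_iff[OF b] unfolding xr by simp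
  have n: "0 < int n" using m_less_n by simp
  have "a \<le> b * int m div int n" using an n by (intro le_div_of_mult_le) (simp_all add: mult.commute)
  then have "0 \<le> (b * int m div int n - a) * int n" using n by simp
  moreover have "b * int m - a * int n = b * int m mod int n + (b * int m div int n - a) * int n"
    by (simp add: algebra_simps)
  moreover have "E < b * int m mod int n" using smaller b x(3) by (simp add: b_def)
  ultimately have G: "E < b * int m - a * int n" by linarith
  (* Compare the gaps below m/n: (b m - a n)/(b n) for x and E/(v n) for u/v. *)
  have "E * b < E * int v" using \<open>0 < E\<close> x(3) by (simp add: b_def)
  also have "\<dots> < (b * int m - a * int n) * int v" using G v(1) by simp
  finally have "E * b < (b * int m - a * int n) * int v" .
  moreover have "E = int v * int m - u * int n" by (simp add: E_def u_def algebra_simps)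
  ultimately have "int n * (a * int v) < int n * (u * b)" by (simp add: algebra_simps)
  then have "a * int v < u * b" using n by simp
  then show ?thesis unfolding xr u_def using b v by (simp only: frac_less_iff of_nat_0_less_iff)
qed

lemma residue_record_best_lower_approx:
  assumes record_v: "residue_record m n v"
  defines "r \<equiv> of_int (int v * int m div int n) / of_int (int v)"
  shows "best_lower_approx (of_nat m / of_nat n) r" and "denom r = int v"
proof -
  define u where "u = int v * int m div int n"
  have v: "0 < v" "v < n" using record_v unfolding residue_record_def by auto
  have r: "r = of_int u / of_int (int v)" by (simp add: r_def u_def)
  have "0 \<le> r" "r < of_nat m / of_nat n" using frac_div_below_m_n[OF v] by (simp_all add: r_def)
  have below: "x < r" if "0 \<le> x" "x < of_nat m / of_nat n" "denom x < int v" for x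
    using residue_record_lower_bound[OF record_v that] by (simp add: r_def)
  show "denom r = int v"
  proof -
    have "denom r \<le> int v" unfolding r using v denom_frac_le[of "int v" u] by simp
    moreover have "\<not> denom r < int v" using below \<open>0 \<le> r\<close> \<open>r < of_nat m / of_nat n\<close> by blast
    ultimately show ?thesis by simp
  qed
  have "x \<le> r" if x: "0 \<le> x" "x < of_nat m / of_nat n" "denom x \<le> denom r" for x
  proof (cases "denom x < int v")
    case True
    then show ?thesis using below x by fastforce
  next
    case False
    then have "denom x = int v" using x(3) \<open>denom r = int v\<close> by simp
    then have xr: "x = of_int (numer x) / of_int (int v)" using numer_denom[of x] by simp
    have "of_int (numer x) / of_int (int v) < (of_nat m / of_nat n :: rat)"
      using x(2) by (simp only: xr [symmetric])
    then have "numer x * int n < int m * int v" using frac_less_m_n_iff[of "int v"] v by simp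
    then have "numer x \<le> u"
      using m_less_n unfolding u_def by (intro le_div_of_mult_le) (simp_all add: mult.commute)
    then show ?thesis unfolding r by (subst xr) (simp add: divide_right_mono)
  qed
  then show "best_lower_approx (of_nat m / of_nat n) r"
    unfolding best_lower_approx_def
    using \<open>0 \<le> r\<close> \<open>r < of_nat m / of_nat n\<close> \<open>denom r = int v\<close> v
    by (simp add: denom_frac_m_n)
qed

lemma denom_image_best_lower_approx:
  "denom ` {r. best_lower_approx (of_nat m / of_nat n) r} = int ` {v. residue_record m n v}"
proof (intro equalityI subsetI)
  fix d assume "d \<in> denom ` {r. best_lower_approx (of_nat m / of_nat n) r}"
  then obtain r where "best_lower_approx (of_nat m / of_nat n) r" "d = denom r" by blast
  then show "d \<in> int ` {v. residue_record m n v}"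
    using best_lower_approx_residue_record denom_pos[of r] by (intro image_eqI[of _ _ "nat d"]) auto
next
  fix d assume "d \<in> int ` {v. residue_record m n v}"
  then obtain v where v: "residue_record m n v" "d = int v" by blast
  then show "d \<in> denom ` {r. best_lower_approx (of_nat m / of_nat n) r}"
    using residue_record_best_lower_approx[OF v(1)]
    by (intro image_eqI[of _ _ "of_int (int v * int m div int n) / of_int (int v)"]) auto
qed

lemma map_Suc_steps_adm_set_eq_denom_LFS:
  assumes "is_LFS (of_nat m / of_nat n) us" "2 * m \<le> n"
  shows "map (\<lambda>k. int (steps k + 1)) (sorted_list_of_set (adm_set m n)) = map denom us"
proof (rule strict_sorted_equal)
  have q: "0 < (of_nat m / of_nat n :: rat)" "(of_nat m / of_nat n :: rat) \<le> 1/2"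
    using assms(2) m_pos m_less_n by (simp_all add: field_simps)
  show "sorted_wrt (<) (map denom us)" by (rule LFS_denom_sorted[OF assms(1) q])
  have "sorted_wrt (<) (sorted_list_of_set (adm_set m n))" by simp
  moreover have "int (steps k + 1) < int (steps l + 1)"
    if "k \<in> set (sorted_list_of_set (adm_set m n))" "l \<in> set (sorted_list_of_set (adm_set m n))" "k < l" for k l
    using that finite_adm_set[OF m_pos] strict_mono_onD[OF strict_mono_on_steps_adm] by simp
  ultimately show "sorted_wrt (<) (map (\<lambda>k. int (steps k + 1)) (sorted_list_of_set (adm_set m n)))"
    unfolding sorted_wrt_map by (rule sorted_wrt_mono_rel[rotated])
  have "set (map denom us) = denom ` {r. best_lower_approx (of_nat m / of_nat n) r}"
    using set_LFS[OF assms(1) q] by simp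
  also have "\<dots> = int ` (\<lambda>k. steps k + 1) ` adm_set m n"
    by (simp only: denom_image_best_lower_approx Suc_steps_image_adm_set)
  also have "\<dots> = set (map (\<lambda>k. int (steps k + 1)) (sorted_list_of_set (adm_set m n)))"
    using finite_adm_set[OF m_pos] by (simp only: image_image set_map set_sorted_list_of_set)
  finally show "set (map (\<lambda>k. int (steps k + 1)) (sorted_list_of_set (adm_set m n))) = set (map denom us)"
    by (rule sym)
qed

end

theorem lemma2p21:
  fixes m n :: nat and us :: "rat list"
  assumes "0 < m" and "2 * m < n" and "coprime m n"
    and "is_LFS (of_nat m / of_nat n) us"
  shows "card (adm_set m n) = length us
    \<and> (\<forall>i < length us.
          int (card (orb m n (sorted_list_of_set (adm_set m n) ! i) 0)) = denom (us ! i))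
    \<and> sorted_wrt (>) (filter (\<lambda>x. x \<in> adm_set m n) (orb_list m n m 0))"
proof -
  interpret coprime_orbit m n using assms(1-3) by unfold_locales simp_all
  let ?ks = "sorted_list_of_set (adm_set m n)"
  have orbit_sizes: "map (\<lambda>k. int (steps k + 1)) ?ks = map denom us"
    using map_Suc_steps_adm_set_eq_denom_LFS assms(2,4) by simp
  then have "card (adm_set m n) = length us" by (metis length_map length_sorted_list_of_set)
  moreover have "int (card (orb m n (?ks ! i) 0)) = denom (us ! i)" if "i < length us" for i
    using arg_cong[OF orbit_sizes, of "\<lambda>xs. xs ! i"] that \<open>card (adm_set m n) = length us\<close>
    by (simp add: card_orb)
  ultimately show ?thesis using adm_set_sorted_desc_along_orbit by blast
qed

end
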